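(* Under the setup and assumptions in the context (in particular, joint exchangeability of $\{(X_i,Y_i,\mathcal{C}_i)\}_{i\in[n+m]}$), for any fixed $\alpha\in(0,1)$, any $0\le k\le n$, and any screening rule satisfying the measurability requirement, the selection set $\mathcal{S}_{\mathrm{ACS}}=P_T$ output by adaptive conformal selection (ACS) at level $\alpha$ satisfies $$\mathrm{FDR}(\mathcal{S}_{\mathrm{ACS}})=\mathbb{E}\Big[\frac{|P_T\cap\mathcal{H}_0|}{|P_T|\vee 1}\Big]\le \alpha.$$
   Context: Setup. Let $n,m\ge 1$ and $0\le k\le n$ be integers. For $i\in[n+m]=\{1,\dots,n+m\}$ let $X_i\in\mathcal{X}$ (feature), $Y_i\in\mathbb{R}$ (outcome) and $\mathcal{C}_i\subseteq\mathbb{R}$ (property set, always observed); write $Z_i=(X_i,Y_i)$. Assume $\{(X_i,Y_i,\mathcal{C}_i)\}_{i\in[n+m]}$ are jointly exchangeable. Membership indicators $A_i\in\{0,1\}$ are such that $(A_1,\dots,A_{n+m})$ is uniformly distributed over binary vectors with exactly $n$ zeros and $m$ ones, independent of the data (this models randomly permuting the indices of $n$ labeled and $m$ test samples): $A_i=0$ means $i$ is a labeled sample ($Y_i$ observed), $A_i=1$ means $i$ is a test sample ($Y_i$ unobserved). Put $\tilde Z_i=Z_i$ if $A_i=0$ and $\tilde Z_i=X_i$ if $A_i=1$. A test index $i$ is null if $Y_i\in\mathcal{C}_i$; $\mathcal{H}_0=\{i: A_i=1, Y_i\in\mathcal{C}_i\}$. ACS screening. A random ordering $\pi$ of $[n+m]$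 is built sequentially. $(\pi(1),\dots,\pi(k))$ is a uniformly random ordered choice of $k$ distinct indices from $\{i:A_i=0\}$, independent of all else. For $\ell\ge k$ define $O_\ell=(\pi(1),\dots,\pi(\ell))$ (screened indices), $U_\ell=[n+m]\setminus O_\ell$, $N^+_\ell=\{i\in U_\ell: A_i=0, Y_i\notin\mathcal{C}_i\}$, $N^-_\ell=\{i\in U_\ell: A_i=0, Y_i\in\mathcal{C}_i\}$, $P_\ell=\{i\in U_\ell: A_i=1\}$, and the $\sigma$-algebra $$\mathcal{F}_\ell=\sigma\Big(O_\ell,\ |N^-_\ell|,\ |P_\ell|,\ \{(\tilde Z_i,A_i)\}_{i\in O_\ell\cup N^+_k},\ \{X_i\}_{i\in U_\ell}\Big).$$ The only requirement on the rule is that for each $\ell\ge k$, $\pi(\ell+1)\in U_\ell$ is $\mathcal{F}_\ell$-measurable. Define $$\widehat{\mathrm{FDP}}(\ell)=\frac{m}{n-k+1}\cdot\frac{1+|N^-_\ell|}{|P_\ell|\vee 1},\qquad T=\inf\{\ell\in\{k,\dots,n+m\}:\widehat{\mathrm{FDP}}(\ell)\le\alpha\},$$ and the output is $\mathcal{S}_{\mathrm{ACS}}=P_T$ (with $P_T=\emptyset$ if $T=\infty$). Convention: $0/0=0$, $a\vee b=\max(a,b)$. *)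

theory Defs
  imports "HOL-Probability.Probability"
begin

(* Indices are 0-based: [n+m] is rendered as {..<n+m}.
   A data vector d maps i to (X_i, Y_i, C_i).
   A membership vector a maps i to True iff i is a test sample (A_i = 1). *)

type_synonym 'x acs_data = "nat \<Rightarrow> 'x \<times> real \<times> real set"

definition Xof :: "'x acs_data \<Rightarrow> nat \<Rightarrow> 'x" where "Xof d i = fst (d i)"
definition Yof :: "'x acs_data \<Rightarrow> nat \<Rightarrow> real" where "Yof d i = fst (snd (d i))"
definition Cof :: "'x acs_data \<Rightarrow> nat \<Rightarrow> real set" where "Cof d i = snd (snd (d i))"

definition Nplus :: "nat \<Rightarrow> 'x acs_data \<Rightarrow> (nat \<Rightarrow> bool) \<Rightarrow> nat set \<Rightarrow> nat set" where
  "Nplus N d a Os = {i \<in> {..<N} - Os. \<not> a i \<and> Yof d i \<notin> Cof d i}"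
definition Nminus :: "nat \<Rightarrow> 'x acs_data \<Rightarrow> (nat \<Rightarrow> bool) \<Rightarrow> nat set \<Rightarrow> nat set" where
  "Nminus N d a Os = {i \<in> {..<N} - Os. \<not> a i \<and> Yof d i \<in> Cof d i}"
definition Pset :: "nat \<Rightarrow> (nat \<Rightarrow> bool) \<Rightarrow> nat set \<Rightarrow> nat set" where
  "Pset N a Os = {i \<in> {..<N} - Os. a i}"

(* The information generating F_l:
   (O_l, |N^-_l|, |P_l|, R = O_l \<union> N^+_k, (A_i)_{i\<in>R}, (Y_i)_{i\<in>R, A_i=0}, (X_i)_{i\<in>[N]}),
   where the masked families use default values outside the revealed indices. *)
type_synonym 'x acs_info =
  "nat list \<times> nat \<times> nat \<times> nat set \<times> (nat \<Rightarrow> bool) \<times> (nat \<Rightarrow> real) \<times> (nat \<Rightarrow> 'x)"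

definition acs_infoM :: "'x measure \<Rightarrow> nat \<Rightarrow> 'x acs_info measure" where
  "acs_infoM MX N =
     (count_space UNIV) \<Otimes>\<^sub>M (count_space UNIV) \<Otimes>\<^sub>M (count_space UNIV) \<Otimes>\<^sub>M (count_space UNIV)
     \<Otimes>\<^sub>M (\<Pi>\<^sub>M i\<in>{..<N}. count_space UNIV) \<Otimes>\<^sub>M (\<Pi>\<^sub>M i\<in>{..<N}. borel)
     \<Otimes>\<^sub>M (\<Pi>\<^sub>M i\<in>{..<N}. MX)"

definition acs_info :: "nat \<Rightarrow> 'x acs_data \<Rightarrow> (nat \<Rightarrow> bool) \<Rightarrow> nat list \<Rightarrow> nat list \<Rightarrow> 'x acs_info" where
  "acs_info N d a init Os =
     (let R = set Os \<union> Nplus N d a (set init) in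
      (Os, card (Nminus N d a (set Os)), card (Pset N a (set Os)), R,
       restrict (\<lambda>i. i \<in> R \<and> a i) {..<N},
       restrict (\<lambda>i. if i \<in> R \<and> \<not> a i then Yof d i else 0) {..<N},
       restrict (\<lambda>i. Xof d i) {..<N}))"

(* screened list after j adaptive steps: O_{k+j}; pi(l+1) = rule l (info at l) *)
primrec acs_order :: "nat \<Rightarrow> 'x acs_data \<Rightarrow> (nat \<Rightarrow> bool) \<Rightarrow> nat list
    \<Rightarrow> (nat \<Rightarrow> 'x acs_info \<Rightarrow> nat) \<Rightarrow> nat \<Rightarrow> nat list" where
  "acs_order N d a init rule 0 = init"
| "acs_order N d a init rule (Suc j) =
     (let Os = acs_order N d a init rule j in Os @ [rule (length Os) (acs_info N d a init Os)])"

definition fdp_hat :: "nat \<Rightarrow> nat \<Rightarrow> nat \<Rightarrow> 'x acs_data \<Rightarrow> (nat \<Rightarrow> bool) \<Rightarrow> nat set \<Rightarrow> real" where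
  "fdp_hat n m k d a Os =
     real m / (real n - real k + 1) * (1 + real (card (Nminus (n+m) d a Os)))
       / real (max (card (Pset (n+m) a Os)) 1)"

definition acs_select :: "nat \<Rightarrow> nat \<Rightarrow> real \<Rightarrow> 'x acs_data \<Rightarrow> (nat \<Rightarrow> bool) \<Rightarrow> nat list
    \<Rightarrow> (nat \<Rightarrow> 'x acs_info \<Rightarrow> nat) \<Rightarrow> nat set" where
  "acs_select n m \<alpha> d a init rule =
     (let k = length init;
          Ord = (\<lambda>l. set (acs_order (n+m) d a init rule (l - k)));
          L = {l \<in> {k..n+m}. fdp_hat n m k d a (Ord l) \<le> \<alpha>}
      in if L = {} then {} else Pset (n+m) a (Ord (Min L)))"

definition acs_fdp :: "nat \<Rightarrow> nat \<Rightarrow> real \<Rightarrow> 'x acs_data \<Rightarrow> (nat \<Rightarrow> bool) \<Rightarrow> nat list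
    \<Rightarrow> (nat \<Rightarrow> 'x acs_info \<Rightarrow> nat) \<Rightarrow> real" where
  "acs_fdp n m \<alpha> d a init rule =
     (let S = acs_select n m \<alpha> d a init rule;
          H0 = {i. i < n+m \<and> a i \<and> Yof d i \<in> Cof d i}
      in real (card (S \<inter> H0)) / real (max (card S) 1))"

(* joint law of (A, (pi(1),...,pi(k))): A uniform over membership vectors with exactly m tests,
   then a uniformly random ordered choice of k distinct labeled indices *)
definition label_pmf :: "nat \<Rightarrow> nat \<Rightarrow> nat \<Rightarrow> ((nat \<Rightarrow> bool) \<times> nat list) pmf" where
  "label_pmf n m k =
     do { a \<leftarrow> pmf_of_set {a. (\<forall>i. a i \<longrightarrow> i < n+m) \<and> card {i. a i} = m};
          init \<leftarrow> pmf_of_set {l. distinct l \<and> length l = k \<and> set l \<subseteq> {i. i < n+m \<and> \<not> a i}};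
          return_pmf (a, init) }"

end

theory Submission
  imports Defs
begin

(* Fix the data; the only randomness left is the uniform label assignment and the initial
   screening order, and the bound is proved conditionally on the data.  Call i a null if
   Y_i \<in> C_i, and let V_s and L_s count the unscreened null test points and null labeled points
   after s adaptive steps.  The information F_s never distinguishes two unscreened nulls, so
   exchanging their labels leaves the screening up to step s unchanged.  Hence, if the next
   screened index is an unscreened null, it is a test point with conditional probability
   V_s / (V_s + L_s), which makes V_s / (1 + L_s) a supermartingale.  The same exchange argument
   gives E[V_0 / (1 + L_0)] \<le> m / (n - k + 1), and at the stopping time
   FDP \<le> \<alpha> (n - k + 1) / m * V_T / (1 + L_T); optional stopping finishes the proof. *)

lemma card_filter_comp_transpose:
  assumes "i \<in> D" "j \<in> D"
  shows "card {x \<in> D. P ((a \<circ> Transposition.transpose i j) x)} = card {x \<in> D. P (a x)}"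
proof (rule bij_betw_same_card[where f = "Transposition.transpose i j"])
  show "bij_betw (Transposition.transpose i j)
          {x \<in> D. P ((a \<circ> Transposition.transpose i j) x)} {x \<in> D. P (a x)}"
    by (rule bij_betw_byWitness[where f' = "Transposition.transpose i j"])
      (use assms in \<open>auto simp: Transposition.transpose_def\<close>)
qed

(* p0 + (p1 - p0) * q with q = v / (v + l) is the mean change of v / (1 + l) when one of v test
   and l labeled points, chosen uniformly, is removed: p1 = -1 / (1 + l) for a test point and
   p0 = v / l - v / (1 + l) for a labeled one.  For l = 0 the junk value v / 0 = 0 gets weight 0. *)
lemma removal_drift_nonpos:
  fixes v l :: nat
  assumes "0 < v + l"
  shows "v / l - v / (1 + l) + (- 1 / (1 + l) - (v / l - v / (1 + l))) * (v / (v + l)) \<le> (0::real)"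
proof (cases "l = 0")
  case False
  define x y where "x = real l" and "y = real v"
  have x: "x > 0" "x + y > 0" using False assms by (simp_all add: x_def y_def)
  have "y / x - y / (1 + x) = y / (x * (1 + x))"
    using x by (simp add: field_simps)
  moreover have "- 1 / (1 + x) - y / (x * (1 + x)) = - (y + x) / (x * (1 + x))"
  proof -
    have "- 1 / (1 + x) = - x / (x * (1 + x))" using x by simp
    then show ?thesis by (simp add: diff_divide_distrib)
  qed
  moreover have "- (y + x) / (x * (1 + x)) * (y / (y + x)) = - y / (x * (1 + x))"
  proof -
    have "(y + x) * (y / (y + x)) = y" using x by simp
    then show ?thesis by (simp only: times_divide_eq_left mult_minus_left)
  qed
  ultimately show ?thesis by (simp add: x_def y_def)
qed (use assms in simp)

lemma div_le_scaled_ratio: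
  fixes V L q c a :: real
  assumes "0 \<le> V" "0 \<le> L" "1 \<le> q" "0 < c" "c * (1 + L) / q \<le> a"
  shows "V / q \<le> a / c * (V / (1 + L))"
proof -
  have "c * (1 + L) \<le> a * q"
    using assms(3,5) by (simp add: divide_le_eq)
  then have "1 / q \<le> a / (c * (1 + L))"
    using assms(2-4) by (simp add: le_divide_eq divide_le_eq mult.commute)
  then have "V * (1 / q) \<le> V * (a / (c * (1 + L)))"
    using assms(1) by (rule mult_left_mono)
  also have "\<dots> = a / c * (V / (1 + L))" by simp
  finally show ?thesis by simp
qed

lemma sum_of_bool_mult:
  fixes c :: real
  shows "finite A \<Longrightarrow> (\<Sum>x\<in>A. of_bool (P x) * c) = card {x \<in> A. P x} * c"
  by (simp add: sum_distrib_right[symmetric] sum_of_bool_eq Int_def)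

lemma sum_rotate3: "(\<Sum>x\<in>A. \<Sum>y\<in>B. \<Sum>z\<in>C. f x y z) = (\<Sum>y\<in>B. \<Sum>z\<in>C. \<Sum>x\<in>A. f x y z)"
  by (rule trans[OF sum.swap]) (rule sum.cong[OF refl], rule sum.swap)

lemma sum_spread_choice:
  fixes c :: real and x :: 'a
  assumes "finite I" "G \<subseteq> I"
  defines "h i j \<equiv> of_bool (i \<in> G \<and> j \<in> G \<and> x = j) * (c / card G)"
  shows "(\<Sum>i\<in>I. \<Sum>j\<in>I. h i j * of_bool (P j)) = c * of_bool (x \<in> G \<and> P x)"
    and "(\<Sum>i\<in>I. \<Sum>j\<in>I. h i j * of_bool (P i)) = c * of_bool (x \<in> G) * (card {i \<in> G. P i} / card G)"
proof -
  have sum_G: "(\<Sum>i\<in>I. of_bool (i \<in> G \<and> Q i) * b) = card {i \<in> G. Q i} * b" for Q and b :: real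
  proof -
    have "{i \<in> I. i \<in> G \<and> Q i} = {i \<in> G. Q i}" using assms(2) by blast
    then show ?thesis using sum_of_bool_mult[OF assms(1)] by metis
  qed
  have pick: "(\<Sum>j\<in>I. h i j * g j) = of_bool (i \<in> G \<and> x \<in> G) * (c / card G * g x)" for i g
  proof -
    have "h i j * g j = (if j = x then of_bool (i \<in> G \<and> x \<in> G) * (c / card G * g x) else 0)" for j
      by (auto simp: h_def)
    then show ?thesis using assms(1,2) by (auto simp: subsetD)
  qed
  have "finite G" using assms(1,2) by (rule finite_subset[rotated])
  then have "card {i \<in> G. x \<in> G} * (c / card G * of_bool (P x)) = c * of_bool (x \<in> G \<and> P x)"
    by (cases "x \<in> G") auto
  then show "(\<Sum>i\<in>I. \<Sum>j\<in>I. h i j * of_bool (P j)) = c * of_bool (x \<in> G \<and> P x)"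
    by (simp only: pick sum_G)
  have "of_bool (i \<in> G \<and> x \<in> G) * (c / card G * of_bool (P i))
      = of_bool (i \<in> G \<and> P i) * (of_bool (x \<in> G) * (c / card G))" for i
    by simp
  then show "(\<Sum>i\<in>I. \<Sum>j\<in>I. h i j * of_bool (P i))
      = c * of_bool (x \<in> G) * (card {i \<in> G. P i} / card G)"
    by (simp only: pick sum_G) simp
qed

(* If exchanging the labels of any two indices of G \<omega> preserves G, the choice x and the weight
   \<Phi>, then the label of the chosen index behaves like the label of a uniform element of G \<omega>. *)
lemma sum_exchangeable_choice:
  fixes \<Omega> :: "'w set" and I :: "'i set" and \<sigma> :: "'i \<Rightarrow> 'i \<Rightarrow> 'w \<Rightarrow> 'w"
    and G :: "'w \<Rightarrow> 'i set" and x :: "'w \<Rightarrow> 'i" and lab :: "'w \<Rightarrow> 'i \<Rightarrow> bool"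
    and \<Phi> :: "'w \<Rightarrow> real"
  assumes "finite I" and G_sub: "\<And>\<omega>. \<omega> \<in> \<Omega> \<Longrightarrow> G \<omega> \<subseteq> I"
    and \<sigma>_closed: "\<And>i j \<omega>. i \<in> I \<Longrightarrow> j \<in> I \<Longrightarrow> \<omega> \<in> \<Omega> \<Longrightarrow> \<sigma> i j \<omega> \<in> \<Omega>"
    and \<sigma>_involutory: "\<And>i j \<omega>. i \<in> I \<Longrightarrow> j \<in> I \<Longrightarrow> \<omega> \<in> \<Omega> \<Longrightarrow> \<sigma> i j (\<sigma> i j \<omega>) = \<omega>"
    and \<sigma>_invariant: "\<And>i j \<omega>. \<omega> \<in> \<Omega> \<Longrightarrow> i \<in> G \<omega> \<Longrightarrow> j \<in> G \<omega> \<Longrightarrow>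
       G (\<sigma> i j \<omega>) = G \<omega> \<and> x (\<sigma> i j \<omega>) = x \<omega> \<and> \<Phi> (\<sigma> i j \<omega>) = \<Phi> \<omega> \<and> lab (\<sigma> i j \<omega>) j = lab \<omega> i"
  shows "(\<Sum>\<omega>\<in>\<Omega>. \<Phi> \<omega> * of_bool (x \<omega> \<in> G \<omega> \<and> lab \<omega> (x \<omega>)))
       = (\<Sum>\<omega>\<in>\<Omega>. \<Phi> \<omega> * of_bool (x \<omega> \<in> G \<omega>) * (card {i \<in> G \<omega>. lab \<omega> i} / card (G \<omega>)))"
proof -
  define h where "h i j \<omega> = of_bool (i \<in> G \<omega> \<and> j \<in> G \<omega> \<and> x \<omega> = j) * (\<Phi> \<omega> / card (G \<omega>))"
    for i j \<omega>
  have spread: "\<Phi> \<omega> * of_bool (x \<omega> \<in> G \<omega> \<and> lab \<omega> (x \<omega>)) = (\<Sum>i\<in>I. \<Sum>j\<in>I. h i j \<omega> * of_bool (lab \<omega> j))"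
      "(\<Sum>i\<in>I. \<Sum>j\<in>I. h i j \<omega> * of_bool (lab \<omega> i))
         = \<Phi> \<omega> * of_bool (x \<omega> \<in> G \<omega>) * (card {i \<in> G \<omega>. lab \<omega> i} / card (G \<omega>))"
    if "\<omega> \<in> \<Omega>" for \<omega>
    using sum_spread_choice[OF \<open>finite I\<close> G_sub[OF that],
        where x = "x \<omega>" and c = "\<Phi> \<omega>" and P = "lab \<omega>"]
    by (simp_all only: h_def)
  have swap: "(\<Sum>\<omega>\<in>\<Omega>. h i j \<omega> * of_bool (lab \<omega> j)) = (\<Sum>\<omega>\<in>\<Omega>. h i j \<omega> * of_bool (lab \<omega> i))"
    if "i \<in> I" "j \<in> I" for i j
  proof -
    have "(\<Sum>\<omega>\<in>\<Omega>. h i j \<omega> * of_bool (lab \<omega> j))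
        = (\<Sum>\<omega>\<in>\<Omega>. h i j (\<sigma> i j \<omega>) * of_bool (lab (\<sigma> i j \<omega>) j))"
      by (rule sum.reindex_bij_witness[of _ "\<sigma> i j" "\<sigma> i j"])
        (use that \<sigma>_closed \<sigma>_involutory in auto)
    also have "\<dots> = (\<Sum>\<omega>\<in>\<Omega>. h i j \<omega> * of_bool (lab \<omega> i))"
    proof (rule sum.cong[OF refl])
      fix \<omega> assume \<omega>: "\<omega> \<in> \<Omega>"
      show "h i j (\<sigma> i j \<omega>) * of_bool (lab (\<sigma> i j \<omega>) j) = h i j \<omega> * of_bool (lab \<omega> i)"
      proof (cases "i \<in> G \<omega> \<and> j \<in> G \<omega>")
        case True
        then show ?thesis using \<sigma>_invariant[OF \<omega>] by (simp add: h_def)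
      next
        case False
        then have "\<not> (i \<in> G (\<sigma> i j \<omega>) \<and> j \<in> G (\<sigma> i j \<omega>))"
          using \<sigma>_invariant[OF \<sigma>_closed[OF that \<omega>], of i j] \<sigma>_involutory[OF that \<omega>] by auto
        then show ?thesis using False by (auto simp: h_def)
      qed
    qed
    finally show ?thesis .
  qed
  have "(\<Sum>\<omega>\<in>\<Omega>. \<Phi> \<omega> * of_bool (x \<omega> \<in> G \<omega> \<and> lab \<omega> (x \<omega>)))
      = (\<Sum>\<omega>\<in>\<Omega>. \<Sum>i\<in>I. \<Sum>j\<in>I. h i j \<omega> * of_bool (lab \<omega> j))"
    by (rule sum.cong[OF refl]) (rule spread(1))
  also have "\<dots> = (\<Sum>i\<in>I. \<Sum>j\<in>I. \<Sum>\<omega>\<in>\<Omega>. h i j \<omega> * of_bool (lab \<omega> j))"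
    by (rule sum_rotate3)
  also have "\<dots> = (\<Sum>i\<in>I. \<Sum>j\<in>I. \<Sum>\<omega>\<in>\<Omega>. h i j \<omega> * of_bool (lab \<omega> i))"
    by (rule sum.cong[OF refl], rule sum.cong[OF refl], rule swap)
  also have "\<dots> = (\<Sum>\<omega>\<in>\<Omega>. \<Sum>i\<in>I. \<Sum>j\<in>I. h i j \<omega> * of_bool (lab \<omega> i))"
    by (rule sum_rotate3[symmetric])
  also have "\<dots> = (\<Sum>\<omega>\<in>\<Omega>. \<Phi> \<omega> * of_bool (x \<omega> \<in> G \<omega>) * (card {i \<in> G \<omega>. lab \<omega> i} / card (G \<omega>)))"
    by (rule sum.cong[OF refl]) (rule spread(2))
  finally show ?thesis .
qed

lemma pmf_of_set_Sigma:
  assumes "finite A" "A \<noteq> {}"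
    and "\<And>a. a \<in> A \<Longrightarrow> finite (B a)" "\<And>a. a \<in> A \<Longrightarrow> B a \<noteq> {}"
    and "\<And>a. a \<in> A \<Longrightarrow> card (B a) = c"
  shows "pmf_of_set (Sigma A B) = do {a \<leftarrow> pmf_of_set A; b \<leftarrow> pmf_of_set (B a); return_pmf (a, b)}"
proof -
  have "pmf_of_set (Sigma A B) = pmf_of_set (\<Union>a\<in>A. Pair a ` B a)"
    by (rule arg_cong[where f = pmf_of_set]) auto
  also have "\<dots> = do {a \<leftarrow> pmf_of_set A; pmf_of_set (Pair a ` B a)}"
    using assms by (intro pmf_of_set_UN[where n = c])
      (auto simp: card_image inj_on_def disjoint_family_on_def)
  also have "\<dots> = do {a \<leftarrow> pmf_of_set A; b \<leftarrow> pmf_of_set (B a); return_pmf (a, b)}"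
  proof (rule bind_pmf_cong[OF refl])
    fix a assume "a \<in> set_pmf (pmf_of_set A)"
    then have "a \<in> A" using assms(1,2) by simp
    then show "pmf_of_set (Pair a ` B a) = do {b \<leftarrow> pmf_of_set (B a); return_pmf (a, b)}"
      using assms(3,4) by (simp add: map_pmf_of_set_inj[symmetric] map_pmf_def inj_on_def)
  qed
  finally show ?thesis .
qed

lemma sum_split_diagonal:
  fixes f :: "'a \<Rightarrow> 'a \<Rightarrow> real"
  assumes "finite A"
  shows "(\<Sum>j\<in>A. \<Sum>i\<in>A. f j i) = (\<Sum>j\<in>A. f j j) + (\<Sum>j\<in>A. \<Sum>i\<in>A. of_bool (i \<noteq> j) * f j i)"
proof -
  have "(\<Sum>i\<in>A. f j i) = f j j + (\<Sum>i\<in>A. of_bool (i \<noteq> j) * f j i)" if "j \<in> A" for j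
  proof -
    have "(\<Sum>i\<in>A. of_bool (i \<noteq> j) * f j i) = (\<Sum>i\<in>A - {j}. f j i)"
      by (rule sum.mono_neutral_cong_right) (use assms in auto)
    then show ?thesis using assms that by (simp add: sum.remove)
  qed
  then have "(\<Sum>j\<in>A. \<Sum>i\<in>A. f j i) = (\<Sum>j\<in>A. f j j + (\<Sum>i\<in>A. of_bool (i \<noteq> j) * f j i))"
    by (rule sum.cong[OF refl])
  then show ?thesis by (simp only: sum.distrib)
qed

locale acs_fixed_data =
  fixes n m k :: nat and \<alpha> :: real and d :: "'x acs_data"
    and rule :: "nat \<Rightarrow> 'x acs_info \<Rightarrow> nat"
  assumes m_pos: "0 < m" and k_le_n: "k \<le> n" and \<alpha>_nonneg: "0 \<le> \<alpha>"
    and rule_valid: "\<And>l I. l < n + m \<Longrightarrow> distinct (fst I) \<Longrightarrow> length (fst I) = l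
      \<Longrightarrow> set (fst I) \<subseteq> {..<n + m} \<Longrightarrow> rule l I \<in> {..<n + m} - set (fst I)"
begin

declare acs_order.simps(2) [simp del]

abbreviation N :: nat where "N \<equiv> n + m"

definition nulls :: "nat set" where "nulls = {i. i < N \<and> Yof d i \<in> Cof d i}"

abbreviation order :: "(nat \<Rightarrow> bool) \<Rightarrow> nat list \<Rightarrow> nat \<Rightarrow> nat list" where
  "order a init s \<equiv> acs_order N d a init rule s"

definition next_index :: "(nat \<Rightarrow> bool) \<Rightarrow> nat list \<Rightarrow> nat \<Rightarrow> nat" where
  "next_index a init s = rule (length (order a init s)) (acs_info N d a init (order a init s))"

lemma order_Suc: "order a init (Suc s) = order a init s @ [next_index a init s]"
  by (simp add: next_index_def Let_def acs_order.simps(2))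

lemma length_order: "length (order a init s) = length init + s"
  by (induction s) (simp_all add: order_Suc)

lemma set_order_mono: "s \<le> s' \<Longrightarrow> set (order a init s) \<subseteq> set (order a init s')"
  by (induction rule: dec_induct) (auto simp: order_Suc)

lemma set_init_subset_order: "set init \<subseteq> set (order a init s)"
  using set_order_mono[of 0 s] by simp

lemma fst_acs_info [simp]: "fst (acs_info N d a init Os) = Os"
  by (simp add: acs_info_def Let_def)

lemma order_valid:
  assumes "distinct init" "set init \<subseteq> {..<N}" "length init + s \<le> N"
  shows "distinct (order a init s) \<and> set (order a init s) \<subseteq> {..<N}"
  using assms(3)
proof (induction s)
  case (Suc s)
  then have "next_index a init s \<in> {..<N} - set (order a init s)"
    using rule_valid[of "length (order a init s)" "acs_info N d a init (order a init s)"]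
    by (auto simp: next_index_def length_order)
  with Suc show ?case by (simp add: order_Suc)
qed (use assms in simp)

lemma next_index_valid:
  assumes "distinct init" "set init \<subseteq> {..<N}" "length init + s < N"
  shows "next_index a init s \<in> {..<N} - set (order a init s)"
  using order_valid[OF assms(1,2), of "Suc s" a] assms(3) by (simp add: order_Suc)

lemma card_Nminus_swap:
  assumes "i \<in> nulls - Os" "j \<in> nulls - Os"
  shows "card (Nminus N d (a \<circ> Transposition.transpose i j) Os) = card (Nminus N d a Os)"
proof -
  have "Nminus N d b Os = {x \<in> ({..<N} - Os) \<inter> nulls. \<not> b x}" for b
    by (auto simp: Nminus_def nulls_def)
  then show ?thesis
    using card_filter_comp_transpose[of i "({..<N} - Os) \<inter> nulls" j Not a] assms
    by (auto simp: nulls_def)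
qed

lemma card_Pset_swap:
  assumes "i \<in> nulls - Os" "j \<in> nulls - Os"
  shows "card (Pset N (a \<circ> Transposition.transpose i j) Os) = card (Pset N a Os)"
  using card_filter_comp_transpose[of i "{..<N} - Os" j id a] assms
  by (auto simp: Pset_def nulls_def)

lemma card_Pset_Int_nulls_swap:
  assumes "i \<in> nulls - Os" "j \<in> nulls - Os"
  shows "card (Pset N (a \<circ> Transposition.transpose i j) Os \<inter> nulls) = card (Pset N a Os \<inter> nulls)"
proof -
  have "Pset N b Os \<inter> nulls = {x \<in> ({..<N} - Os) \<inter> nulls. b x}" for b
    by (auto simp: Pset_def nulls_def)
  then show ?thesis
    using card_filter_comp_transpose[of i "({..<N} - Os) \<inter> nulls" j id a] assms
    by (auto simp: nulls_def)
qed

(* The screening information reveals labels only on screened indices and on labeled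
   non-nulls, so it cannot tell two unscreened nulls apart. *)

lemma acs_info_swap:
  assumes "i \<in> nulls - set Os" "j \<in> nulls - set Os"
  shows "acs_info N d (a \<circ> Transposition.transpose i j) init Os = acs_info N d a init Os"
proof -
  let ?b = "a \<circ> Transposition.transpose i j"
  have Nplus: "Nplus N d ?b S = Nplus N d a S" for S
    using assms by (auto simp: Nplus_def nulls_def Transposition.transpose_def)
  let ?R = "set Os \<union> Nplus N d a (set init)"
  have same: "?b x = a x" if "x \<in> ?R" for x
    using that assms by (auto simp: Nplus_def nulls_def Transposition.transpose_def)
  have "restrict (\<lambda>x. x \<in> ?R \<and> ?b x) {..<N} = restrict (\<lambda>x. x \<in> ?R \<and> a x) {..<N}"
    and "restrict (\<lambda>x. if x \<in> ?R \<and> \<not> ?b x then Yof d x else 0) {..<N}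
       = restrict (\<lambda>x. if x \<in> ?R \<and> \<not> a x then Yof d x else 0) {..<N}"
    using same by (auto intro!: restrict_ext)
  then show ?thesis
    using card_Nminus_swap[OF assms] card_Pset_swap[OF assms] Nplus
    by (simp only: acs_info_def Let_def)
qed

lemma order_swap:
  assumes "i \<in> nulls - set (order a init s)" "j \<in> nulls - set (order a init s)"
  shows "order (a \<circ> Transposition.transpose i j) init s = order a init s"
  using assms
proof (induction s)
  case (Suc s)
  have "set (order a init s) \<subseteq> set (order a init (Suc s))" by (rule set_order_mono) simp
  with Suc.prems have "i \<in> nulls - set (order a init s)" "j \<in> nulls - set (order a init s)"
    by auto
  with Suc.IH acs_info_swap[OF this] show ?case by (simp only: order_Suc next_index_def)
qed simp

definition membership_vectors :: "(nat \<Rightarrow> bool) set" where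
  "membership_vectors = {a. (\<forall>i. a i \<longrightarrow> i < N) \<and> card {i. a i} = m}"

definition initial_orders :: "(nat \<Rightarrow> bool) \<Rightarrow> nat list set" where
  "initial_orders a = {l. distinct l \<and> length l = k \<and> set l \<subseteq> {i. i < N \<and> \<not> a i}}"

definition label_space :: "((nat \<Rightarrow> bool) \<times> nat list) set" where
  "label_space = Sigma membership_vectors initial_orders"

lemma label_space_iff:
  "\<omega> \<in> label_space \<longleftrightarrow> (\<forall>i. fst \<omega> i \<longrightarrow> i < N) \<and> card {i. fst \<omega> i} = m
     \<and> distinct (snd \<omega>) \<and> length (snd \<omega>) = k \<and> set (snd \<omega>) \<subseteq> {i. i < N \<and> \<not> fst \<omega> i}"
  by (cases \<omega>) (simp add: label_space_def membership_vectors_def initial_orders_def)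

lemma card_labeled:
  assumes "a \<in> membership_vectors"
  shows "card {i. i < N \<and> \<not> a i} = n"
proof -
  have "{i. i < N \<and> \<not> a i} = {..<N} - {i. a i}" "{i. a i} \<subseteq> {..<N}"
    using assms by (auto simp: membership_vectors_def)
  then show ?thesis using assms by (simp add: card_Diff_subset finite_subset membership_vectors_def)
qed

lemma finite_membership_vectors: "finite membership_vectors"
proof (rule finite_subset)
  show "membership_vectors \<subseteq> (\<lambda>S x. x \<in> S) ` Pow {..<N}"
  proof
    fix a assume "a \<in> membership_vectors"
    then have "a = (\<lambda>x. x \<in> {i. a i})" "{i. a i} \<in> Pow {..<N}"
      by (auto simp: membership_vectors_def)
    then show "a \<in> (\<lambda>S x. x \<in> S) ` Pow {..<N}" by blast
  qed
qed simp

lemma card_initial_orders: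
  assumes "a \<in> membership_vectors"
  shows "card (initial_orders a) = \<Prod>{n - k + 1..n}"
proof -
  have "initial_orders a = {l. length l = k \<and> distinct l \<and> set l \<subseteq> {i. i < N \<and> \<not> a i}}"
    by (auto simp: initial_orders_def)
  then show ?thesis
    using card_lists_distinct_length_eq[of "{i. i < N \<and> \<not> a i}" k] card_labeled[OF assms] k_le_n
    by simp
qed

lemma finite_initial_orders: "finite (initial_orders a)"
proof (rule finite_subset)
  show "initial_orders a \<subseteq> {l. set l \<subseteq> {..<N} \<and> length l = k}"
    by (auto simp: initial_orders_def)
qed (rule finite_lists_length_eq, simp)

lemma initial_orders_nonempty: "a \<in> membership_vectors \<Longrightarrow> initial_orders a \<noteq> {}"
  using card_initial_orders[of a] by (auto simp: prod_pos)

lemma finite_label_space: "finite label_space"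
  unfolding label_space_def
  by (rule finite_SigmaI[OF finite_membership_vectors finite_initial_orders])

lemma label_space_nonempty: "label_space \<noteq> {}"
proof -
  have "(\<lambda>i. i < m) \<in> membership_vectors" by (auto simp: membership_vectors_def)
  then show ?thesis using initial_orders_nonempty by (auto simp: label_space_def)
qed

lemma label_pmf_eq: "label_pmf n m k = pmf_of_set label_space"
  unfolding label_space_def
  by (subst pmf_of_set_Sigma[OF finite_membership_vectors _ finite_initial_orders
        initial_orders_nonempty card_initial_orders])
    (use label_space_nonempty in \<open>auto simp: label_space_def label_pmf_def
        membership_vectors_def initial_orders_def\<close>)

(* Indices of the initial order must stay labeled, so only labels outside it are exchanged;
   this makes swap_labels i j an involution of label_space. *)
definition swap_labels :: "nat \<Rightarrow> nat \<Rightarrow> (nat \<Rightarrow> bool) \<times> nat list \<Rightarrow> (nat \<Rightarrow> bool) \<times> nat list" where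
  "swap_labels i j \<omega> = (if i \<notin> set (snd \<omega>) \<and> j \<notin> set (snd \<omega>)
     then (fst \<omega> \<circ> Transposition.transpose i j, snd \<omega>) else \<omega>)"

lemma swap_labels_involutory [simp]: "swap_labels i j (swap_labels i j \<omega>) = \<omega>"
  by (auto simp: swap_labels_def comp_assoc)

lemma swap_labels_in_label_space:
  assumes "i < N" "j < N" "\<omega> \<in> label_space"
  shows "swap_labels i j \<omega> \<in> label_space"
proof (cases "i \<notin> set (snd \<omega>) \<and> j \<notin> set (snd \<omega>)")
  case True
  have "card {x. (fst \<omega> \<circ> Transposition.transpose i j) x} = card {x. fst \<omega> x}"
    using card_filter_comp_transpose[of i UNIV j id "fst \<omega>"] by simp
  with True assms show ?thesis
    by (auto simp: swap_labels_def label_space_iff Transposition.transpose_def)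
qed (use assms in \<open>auto simp: swap_labels_def\<close>)

lemma sum_swap_labels:
  assumes "i < N" "j < N"
  shows "(\<Sum>\<omega>\<in>label_space. h (swap_labels i j \<omega>)) = (\<Sum>\<omega>\<in>label_space. h \<omega>)"
  by (rule sum.reindex_bij_witness[of _ "swap_labels i j" "swap_labels i j"])
    (auto simp: swap_labels_in_label_space assms)

definition screened :: "(nat \<Rightarrow> bool) \<times> nat list \<Rightarrow> nat \<Rightarrow> nat set" where
  "screened \<omega> s = set (order (fst \<omega>) (snd \<omega>) s)"

definition next_screened :: "(nat \<Rightarrow> bool) \<times> nat list \<Rightarrow> nat \<Rightarrow> nat" where
  "next_screened \<omega> s = next_index (fst \<omega>) (snd \<omega>) s"

definition live_nulls :: "(nat \<Rightarrow> bool) \<times> nat list \<Rightarrow> nat \<Rightarrow> nat set" where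
  "live_nulls \<omega> s = nulls - screened \<omega> s"

definition null_tests :: "(nat \<Rightarrow> bool) \<times> nat list \<Rightarrow> nat \<Rightarrow> nat" where
  "null_tests \<omega> s = card (Pset N (fst \<omega>) (screened \<omega> s) \<inter> nulls)"

definition null_labeled :: "(nat \<Rightarrow> bool) \<times> nat list \<Rightarrow> nat \<Rightarrow> nat" where
  "null_labeled \<omega> s = card (Nminus N d (fst \<omega>) (screened \<omega> s))"

definition null_ratio :: "(nat \<Rightarrow> bool) \<times> nat list \<Rightarrow> nat \<Rightarrow> real" where
  "null_ratio \<omega> s = null_tests \<omega> s / (1 + null_labeled \<omega> s)"

definition stops :: "(nat \<Rightarrow> bool) \<times> nat list \<Rightarrow> nat \<Rightarrow> bool" where
  "stops \<omega> s \<longleftrightarrow> fdp_hat n m k d (fst \<omega>) (screened \<omega> s) \<le> \<alpha>"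

lemma screened_Suc: "screened \<omega> (Suc s) = insert (next_screened \<omega> s) (screened \<omega> s)"
  by (auto simp: screened_def next_screened_def order_Suc)

lemma next_screened_valid:
  assumes "\<omega> \<in> label_space" "k + s < N"
  shows "next_screened \<omega> s \<in> {..<N} - screened \<omega> s"
  using assms next_index_valid[of "snd \<omega>" s "fst \<omega>"]
  by (auto simp: label_space_iff next_screened_def screened_def)

lemma card_live_nulls: "card (live_nulls \<omega> s) = null_tests \<omega> s + null_labeled \<omega> s"
proof -
  have "live_nulls \<omega> s
      = (Pset N (fst \<omega>) (screened \<omega> s) \<inter> nulls) \<union> Nminus N d (fst \<omega>) (screened \<omega> s)"
    by (auto simp: live_nulls_def Pset_def Nminus_def nulls_def)
  moreover have "(Pset N (fst \<omega>) (screened \<omega> s) \<inter> nulls) \<inter> Nminus N d (fst \<omega>) (screened \<omega> s) = {}"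
    by (auto simp: Pset_def Nminus_def)
  ultimately show ?thesis
    by (simp add: null_tests_def null_labeled_def card_Un_disjoint Pset_def Nminus_def)
qed

lemma swap_labels_invariant:
  assumes ij: "i \<in> live_nulls \<omega> J" "j \<in> live_nulls \<omega> J" and "s \<le> J"
  shows "swap_labels i j \<omega> = (fst \<omega> \<circ> Transposition.transpose i j, snd \<omega>)"
    and "screened (swap_labels i j \<omega>) s = screened \<omega> s"
    and "null_tests (swap_labels i j \<omega>) s = null_tests \<omega> s"
    and "null_labeled (swap_labels i j \<omega>) s = null_labeled \<omega> s"
    and "stops (swap_labels i j \<omega>) s = stops \<omega> s"
    and "next_screened (swap_labels i j \<omega>) J = next_screened \<omega> J"
proof -
  have ij_s: "i \<in> nulls - screened \<omega> s" "j \<in> nulls - screened \<omega> s"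
    using ij set_order_mono[OF \<open>s \<le> J\<close>] by (auto simp: live_nulls_def screened_def)
  then have "i \<notin> set (snd \<omega>)" "j \<notin> set (snd \<omega>)"
    using set_init_subset_order by (auto simp: screened_def)
  then show sw: "swap_labels i j \<omega> = (fst \<omega> \<circ> Transposition.transpose i j, snd \<omega>)"
    by (simp add: swap_labels_def)
  have order_eq: "order (fst \<omega> \<circ> Transposition.transpose i j) (snd \<omega>) t = order (fst \<omega>) (snd \<omega>) t"
    if "i \<in> nulls - screened \<omega> t" "j \<in> nulls - screened \<omega> t" for t
    using that by (intro order_swap) (auto simp: screened_def)
  show scr: "screened (swap_labels i j \<omega>) s = screened \<omega> s"
    using order_eq[OF ij_s] sw by (simp add: screened_def)
  show "null_tests (swap_labels i j \<omega>) s = null_tests \<omega> s"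
    using scr sw card_Pset_Int_nulls_swap[OF ij_s] by (simp add: null_tests_def)
  show "null_labeled (swap_labels i j \<omega>) s = null_labeled \<omega> s"
    using scr sw card_Nminus_swap[OF ij_s] by (simp add: null_labeled_def)
  show "stops (swap_labels i j \<omega>) s = stops \<omega> s"
    using scr sw card_Nminus_swap[OF ij_s] card_Pset_swap[OF ij_s]
    by (simp add: stops_def fdp_hat_def)
  have "i \<in> nulls - set (order (fst \<omega>) (snd \<omega>) J)" "j \<in> nulls - set (order (fst \<omega>) (snd \<omega>) J)"
    using ij by (auto simp: live_nulls_def screened_def)
  from acs_info_swap[OF this] show "next_screened (swap_labels i j \<omega>) J = next_screened \<omega> J"
    using order_eq[of J] ij sw by (simp add: next_screened_def next_index_def live_nulls_def)
qed

lemma null_ratio_Suc: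
  assumes "\<omega> \<in> label_space" "k + J < N"
  shows "null_ratio \<omega> (Suc J) - null_ratio \<omega> J =
    (if next_screened \<omega> J \<in> live_nulls \<omega> J then
       (if fst \<omega> (next_screened \<omega> J) then - 1 / (1 + null_labeled \<omega> J)
        else null_tests \<omega> J / null_labeled \<omega> J - null_tests \<omega> J / (1 + null_labeled \<omega> J))
     else 0)"
proof -
  let ?x = "next_screened \<omega> J" and ?O = "screened \<omega> J"
  let ?T = "Pset N (fst \<omega>) ?O \<inter> nulls" and ?L = "Nminus N d (fst \<omega>) ?O"
  have x: "?x < N" "?x \<notin> ?O" using next_screened_valid[OF assms] by auto
  have T: "null_tests \<omega> (Suc J) = card (?T - {?x})"
    unfolding null_tests_def screened_Suc by (rule arg_cong[where f = card]) (auto simp: Pset_def)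
  have L: "null_labeled \<omega> (Suc J) = card (?L - {?x})"
    unfolding null_labeled_def screened_Suc
    by (rule arg_cong[where f = card]) (auto simp: Nminus_def)
  have fin: "finite ?T" "finite ?L" by (auto simp: Pset_def Nminus_def)
  show ?thesis
  proof (cases "?x \<in> live_nulls \<omega> J")
    case live: True
    show ?thesis
    proof (cases "fst \<omega> ?x")
      case True
      with live x have "?x \<in> ?T" "?x \<notin> ?L" by (auto simp: live_nulls_def Pset_def Nminus_def)
      moreover have "card ?T > 0" using fin(1) \<open>?x \<in> ?T\<close> card_gt_0_iff by blast
      ultimately have "null_tests \<omega> J = null_tests \<omega> (Suc J) + 1"
        and "null_labeled \<omega> (Suc J) = null_labeled \<omega> J"
        using T L fin by (simp_all add: null_tests_def null_labeled_def)
      with live True show ?thesis by (simp add: null_ratio_def diff_divide_distrib[symmetric])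
    next
      case False
      with live x have "?x \<in> ?L" "?x \<notin> ?T"
        by (auto simp: live_nulls_def Pset_def Nminus_def nulls_def)
      moreover have "card ?L > 0" using fin(2) \<open>?x \<in> ?L\<close> card_gt_0_iff by blast
      ultimately have "null_tests \<omega> (Suc J) = null_tests \<omega> J"
        and "null_labeled \<omega> J = 1 + null_labeled \<omega> (Suc J)"
        using T L fin by (simp_all add: null_tests_def null_labeled_def)
      with live False show ?thesis by (simp add: null_ratio_def)
    qed
  next
    case False
    with x have "?x \<notin> ?T" "?x \<notin> ?L" by (auto simp: live_nulls_def Pset_def Nminus_def nulls_def)
    with T L False show ?thesis by (simp add: null_ratio_def null_tests_def null_labeled_def)
  qed
qed

definition not_stopped :: "(nat \<Rightarrow> bool) \<times> nat list \<Rightarrow> nat \<Rightarrow> real" where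
  "not_stopped \<omega> J = of_bool (\<forall>s\<le>J. \<not> stops \<omega> s)"

lemma sum_next_screened_null_test:
  assumes \<Phi>_swap: "\<And>i j \<omega>. i \<in> live_nulls \<omega> J \<Longrightarrow> j \<in> live_nulls \<omega> J
      \<Longrightarrow> \<Phi> (swap_labels i j \<omega>) = \<Phi> \<omega>"
  shows "(\<Sum>\<omega>\<in>label_space.
            \<Phi> \<omega> * of_bool (next_screened \<omega> J \<in> live_nulls \<omega> J \<and> fst \<omega> (next_screened \<omega> J)))
       = (\<Sum>\<omega>\<in>label_space. \<Phi> \<omega> * of_bool (next_screened \<omega> J \<in> live_nulls \<omega> J)
            * (real (null_tests \<omega> J) / (real (null_tests \<omega> J) + real (null_labeled \<omega> J))))"
proof -
  have tests: "card {i \<in> live_nulls \<omega> J. fst \<omega> i} = null_tests \<omega> J" for \<omega>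
  proof -
    have "{i \<in> live_nulls \<omega> J. fst \<omega> i} = Pset N (fst \<omega>) (screened \<omega> J) \<inter> nulls"
      by (auto simp: live_nulls_def Pset_def nulls_def)
    then show ?thesis by (simp add: null_tests_def)
  qed
  have "(\<Sum>\<omega>\<in>label_space.
          \<Phi> \<omega> * of_bool (next_screened \<omega> J \<in> live_nulls \<omega> J \<and> fst \<omega> (next_screened \<omega> J)))
      = (\<Sum>\<omega>\<in>label_space. \<Phi> \<omega> * of_bool (next_screened \<omega> J \<in> live_nulls \<omega> J)
            * (card {i \<in> live_nulls \<omega> J. fst \<omega> i} / card (live_nulls \<omega> J)))"
  proof (rule sum_exchangeable_choice[where I = "{..<N}" and \<sigma> = swap_labels
        and G = "\<lambda>\<omega>. live_nulls \<omega> J" and x = "\<lambda>\<omega>. next_screened \<omega> J" and lab = fst])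
    fix i j \<omega> assume "i \<in> live_nulls \<omega> J" "j \<in> live_nulls \<omega> J"
    from swap_labels_invariant[OF this order.refl] \<Phi>_swap[OF this]
    show "live_nulls (swap_labels i j \<omega>) J = live_nulls \<omega> J
        \<and> next_screened (swap_labels i j \<omega>) J = next_screened \<omega> J
        \<and> \<Phi> (swap_labels i j \<omega>) = \<Phi> \<omega> \<and> fst (swap_labels i j \<omega>) j = fst \<omega> i"
      by (simp add: live_nulls_def)
  qed (auto simp: live_nulls_def nulls_def swap_labels_in_label_space)
  then show ?thesis by (simp only: tests card_live_nulls of_nat_add)
qed

lemma sum_not_stopped_increment_nonpos:
  assumes "k + J < N"
  shows "(\<Sum>\<omega>\<in>label_space. not_stopped \<omega> J * (null_ratio \<omega> (Suc J) - null_ratio \<omega> J)) \<le> 0"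
proof -
  define x where "x \<omega> = next_screened \<omega> J" for \<omega>
  define G where "G \<omega> = live_nulls \<omega> J" for \<omega>
  define V where "V \<omega> = null_tests \<omega> J" for \<omega>
  define L where "L \<omega> = null_labeled \<omega> J" for \<omega>
  define p0 where "p0 \<omega> = V \<omega> / L \<omega> - V \<omega> / (1 + L \<omega>)" for \<omega>
  define p1 where "p1 \<omega> = - 1 / (1 + L \<omega>)" for \<omega>
  define q where "q \<omega> = real (V \<omega>) / (real (V \<omega>) + real (L \<omega>))" for \<omega>
  define \<Phi> where "\<Phi> \<omega> = not_stopped \<omega> J * (p1 \<omega> - p0 \<omega>)" for \<omega>
  have split: "not_stopped \<omega> J * (null_ratio \<omega> (Suc J) - null_ratio \<omega> J)
      = not_stopped \<omega> J * of_bool (x \<omega> \<in> G \<omega>) * p0 \<omega> + \<Phi> \<omega> * of_bool (x \<omega> \<in> G \<omega> \<and> fst \<omega> (x \<omega>))"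
    if "\<omega> \<in> label_space" for \<omega>
  proof -
    have "null_ratio \<omega> (Suc J) - null_ratio \<omega> J
        = (if x \<omega> \<in> G \<omega> then if fst \<omega> (x \<omega>) then p1 \<omega> else p0 \<omega> else 0)"
      using null_ratio_Suc[OF that assms] by (simp only: x_def G_def p0_def p1_def V_def L_def)
    then show ?thesis
      by (cases "x \<omega> \<in> G \<omega>"; cases "fst \<omega> (x \<omega>)") (simp_all add: \<Phi>_def right_diff_distrib)
  qed
  have exchange: "(\<Sum>\<omega>\<in>label_space. \<Phi> \<omega> * of_bool (x \<omega> \<in> G \<omega> \<and> fst \<omega> (x \<omega>)))
      = (\<Sum>\<omega>\<in>label_space. \<Phi> \<omega> * of_bool (x \<omega> \<in> G \<omega>) * q \<omega>)"
    unfolding x_def G_def q_def V_def L_def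
  proof (rule sum_next_screened_null_test)
    fix i j \<omega> assume "i \<in> live_nulls \<omega> J" "j \<in> live_nulls \<omega> J"
    from swap_labels_invariant(3-5)[OF this] show "\<Phi> (swap_labels i j \<omega>) = \<Phi> \<omega>"
      by (simp add: \<Phi>_def p0_def p1_def V_def L_def not_stopped_def)
  qed
  have "(\<Sum>\<omega>\<in>label_space. not_stopped \<omega> J * (null_ratio \<omega> (Suc J) - null_ratio \<omega> J))
      = (\<Sum>\<omega>\<in>label_space. not_stopped \<omega> J * of_bool (x \<omega> \<in> G \<omega>) * p0 \<omega>)
        + (\<Sum>\<omega>\<in>label_space. \<Phi> \<omega> * of_bool (x \<omega> \<in> G \<omega> \<and> fst \<omega> (x \<omega>)))"
    by (simp add: split flip: sum.distrib)
  also have "\<dots> = (\<Sum>\<omega>\<in>label_space. not_stopped \<omega> J * of_bool (x \<omega> \<in> G \<omega>) * p0 \<omega>)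
        + (\<Sum>\<omega>\<in>label_space. \<Phi> \<omega> * of_bool (x \<omega> \<in> G \<omega>) * q \<omega>)"
    by (simp only: exchange)
  also have "\<dots> = (\<Sum>\<omega>\<in>label_space. not_stopped \<omega> J * of_bool (x \<omega> \<in> G \<omega>)
           * (p0 \<omega> + (p1 \<omega> - p0 \<omega>) * q \<omega>))"
    unfolding sum.distrib[symmetric] by (rule sum.cong) (simp_all add: \<Phi>_def algebra_simps)
  also have "\<dots> \<le> 0"
  proof (rule sum_nonpos)
    fix \<omega>
    have "finite (G \<omega>)" by (simp add: G_def live_nulls_def nulls_def)
    then have "x \<omega> \<in> G \<omega> \<Longrightarrow> 0 < V \<omega> + L \<omega>"
      by (auto simp: G_def V_def L_def card_live_nulls[symmetric] card_gt_0_iff)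
    then show "not_stopped \<omega> J * of_bool (x \<omega> \<in> G \<omega>) * (p0 \<omega> + (p1 \<omega> - p0 \<omega>) * q \<omega>) \<le> 0"
      using removal_drift_nonpos[of "V \<omega>" "L \<omega>"]
      by (auto simp: not_stopped_def p0_def p1_def q_def)
  qed
  finally show ?thesis .
qed

primrec stopped_ratio :: "(nat \<Rightarrow> bool) \<times> nat list \<Rightarrow> nat \<Rightarrow> real" where
  "stopped_ratio \<omega> 0 = null_ratio \<omega> 0"
| "stopped_ratio \<omega> (Suc J) = (if \<exists>s\<le>J. stops \<omega> s then stopped_ratio \<omega> J else null_ratio \<omega> (Suc J))"

lemma stopped_ratio_before_stop: "\<forall>s<J. \<not> stops \<omega> s \<Longrightarrow> stopped_ratio \<omega> J = null_ratio \<omega> J"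
  by (induction J) auto

lemma stopped_ratio_after_stop:
  assumes "stops \<omega> s" "\<forall>s'<s. \<not> stops \<omega> s'" "s \<le> J"
  shows "stopped_ratio \<omega> J = null_ratio \<omega> s"
  using assms(3)
proof (induction rule: dec_induct)
  case base
  then show ?case using assms(2) by (rule stopped_ratio_before_stop)
next
  case (step J)
  then show ?case using assms(1) by auto
qed

lemma stopped_ratio_Suc:
  "stopped_ratio \<omega> (Suc J) - stopped_ratio \<omega> J
     = not_stopped \<omega> J * (null_ratio \<omega> (Suc J) - null_ratio \<omega> J)"
  by (auto simp: not_stopped_def stopped_ratio_before_stop)

lemma sum_stopped_ratio_le:
  "J \<le> N - k \<Longrightarrow> (\<Sum>\<omega>\<in>label_space. stopped_ratio \<omega> J) \<le> (\<Sum>\<omega>\<in>label_space. null_ratio \<omega> 0)"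
proof (induction J)
  case (Suc J)
  have "(\<Sum>\<omega>\<in>label_space. stopped_ratio \<omega> (Suc J))
      = (\<Sum>\<omega>\<in>label_space. stopped_ratio \<omega> J)
        + (\<Sum>\<omega>\<in>label_space. not_stopped \<omega> J * (null_ratio \<omega> (Suc J) - null_ratio \<omega> J))"
    by (simp add: stopped_ratio_Suc[symmetric] flip: sum.distrib)
  also have "\<dots> \<le> (\<Sum>\<omega>\<in>label_space. stopped_ratio \<omega> J)"
    using sum_not_stopped_increment_nonpos Suc.prems by simp
  finally show ?case using Suc by simp
qed simp

lemma stopped_ratio_nonneg: "0 \<le> stopped_ratio \<omega> J"
  by (induction J) (simp_all add: null_ratio_def)

lemma acs_select_first_stop:
  assumes "\<omega> \<in> label_space" "k + s \<le> N" "stops \<omega> s" "\<forall>s'<s. \<not> stops \<omega> s'"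
  shows "acs_select n m \<alpha> d (fst \<omega>) (snd \<omega>) rule = Pset N (fst \<omega>) (screened \<omega> s)"
proof -
  let ?T = "{l \<in> {k..N}. fdp_hat n m k d (fst \<omega>) (set (order (fst \<omega>) (snd \<omega>) (l - k))) \<le> \<alpha>}"
  have init: "length (snd \<omega>) = k" using assms(1) by (simp add: label_space_iff)
  have "k + s \<in> ?T" using assms(2,3) by (simp add: stops_def screened_def)
  moreover have "k + s \<le> l" if "l \<in> ?T" for l
    using that assms(4) by (cases "l - k < s") (auto simp: stops_def screened_def)
  ultimately have "Min ?T = k + s" by (intro Min_eqI) auto
  with \<open>k + s \<in> ?T\<close> show ?thesis
    unfolding acs_select_def Let_def init by (auto simp: screened_def)
qed

lemma acs_select_no_stop:
  assumes "\<omega> \<in> label_space" "\<forall>s. k + s \<le> N \<longrightarrow> \<not> stops \<omega> s"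
  shows "acs_select n m \<alpha> d (fst \<omega>) (snd \<omega>) rule = {}"
proof -
  have init: "length (snd \<omega>) = k" using assms(1) by (simp add: label_space_iff)
  have "fdp_hat n m k d (fst \<omega>) (set (order (fst \<omega>) (snd \<omega>) (l - k))) > \<alpha>" if "k \<le> l" "l \<le> N" for l
    using assms(2) that by (auto simp: stops_def screened_def not_le dest: spec[of _ "l - k"])
  then show ?thesis unfolding acs_select_def Let_def init by force
qed

lemma fdp_le_stopped_ratio:
  assumes "\<omega> \<in> label_space"
  shows "acs_fdp n m \<alpha> d (fst \<omega>) (snd \<omega>) rule
     \<le> \<alpha> * (real n - real k + 1) / m * stopped_ratio \<omega> (N - k)"
proof (cases "\<exists>s. k + s \<le> N \<and> stops \<omega> s")
  case True
  then obtain s where s: "k + s \<le> N" "stops \<omega> s" and first: "\<forall>s'<s. \<not> stops \<omega> s'"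
    unfolding exists_least_iff[of "\<lambda>s. k + s \<le> N \<and> stops \<omega> s"] by auto
  have "acs_fdp n m \<alpha> d (fst \<omega>) (snd \<omega>) rule
      = null_tests \<omega> s / max (card (Pset N (fst \<omega>) (screened \<omega> s))) 1"
    using acs_select_first_stop[OF assms s first]
    by (simp add: acs_fdp_def null_tests_def nulls_def Int_def Pset_def conj_ac)
  also have "\<dots> \<le> \<alpha> / (m / (real n - real k + 1)) * (null_tests \<omega> s / (1 + real (null_labeled \<omega> s)))"
    using s(2) k_le_n m_pos
    by (intro div_le_scaled_ratio) (auto simp: stops_def fdp_hat_def null_labeled_def)
  also have "\<dots> = \<alpha> * (real n - real k + 1) / m * stopped_ratio \<omega> (N - k)"
    using stopped_ratio_after_stop[OF s(2) first] s(1) by (simp add: null_ratio_def)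
  finally show ?thesis .
next
  case False
  then have "acs_fdp n m \<alpha> d (fst \<omega>) (snd \<omega>) rule = 0"
    using acs_select_no_stop[OF assms] by (simp add: acs_fdp_def)
  also have "0 \<le> \<alpha> * (real n - real k + 1) / m * stopped_ratio \<omega> (N - k)"
    using \<alpha>_nonneg k_le_n
    by (intro mult_nonneg_nonneg divide_nonneg_nonneg stopped_ratio_nonneg) auto
  finally show ?thesis .
qed

definition unscreened_labeled :: "(nat \<Rightarrow> bool) \<times> nat list \<Rightarrow> nat set" where
  "unscreened_labeled \<omega> = {x. x < N \<and> \<not> fst \<omega> x \<and> x \<notin> set (snd \<omega>)}"

(* A null test point j spreads unit mass uniformly over the nulls among j and the unscreened
   labeled points.  The diagonal sums to null_ratio \<omega> 0 and each row to at most one per test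
   point, while exchanging labels turns the off-diagonal mass into n - k copies of the diagonal;
   hence (n - k + 1) E[null_ratio \<omega> 0] \<le> m. *)
definition share :: "(nat \<Rightarrow> bool) \<times> nat list \<Rightarrow> nat \<Rightarrow> nat \<Rightarrow> real" where
  "share \<omega> j i = (if fst \<omega> j \<and> i \<in> nulls \<inter> insert j (unscreened_labeled \<omega>)
     then 1 / card (nulls \<inter> insert j (unscreened_labeled \<omega>)) else 0)"

lemma card_unscreened_labeled:
  assumes "\<omega> \<in> label_space"
  shows "card (unscreened_labeled \<omega>) = n - k"
proof -
  have "unscreened_labeled \<omega> = {x. x < N \<and> \<not> fst \<omega> x} - set (snd \<omega>)"
    by (auto simp: unscreened_labeled_def)
  moreover have "set (snd \<omega>) \<subseteq> {x. x < N \<and> \<not> fst \<omega> x}" "card (set (snd \<omega>)) = k"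
    using assms by (auto simp: label_space_iff distinct_card)
  moreover have "card {x. x < N \<and> \<not> fst \<omega> x} = n"
    using assms card_labeled[of "fst \<omega>"] by (cases \<omega>) (simp add: label_space_def)
  ultimately show ?thesis by (simp add: card_Diff_subset finite_subset[of _ "{..<N}"])
qed

lemma null_ratio_0_eq_sum_share:
  assumes "\<omega> \<in> label_space"
  shows "null_ratio \<omega> 0 = (\<Sum>j<N. share \<omega> j j)"
proof -
  let ?U = "nulls \<inter> unscreened_labeled \<omega>"
  have init_labeled: "\<not> fst \<omega> x" if "x \<in> set (snd \<omega>)" for x
    using assms that by (auto simp: label_space_iff)
  have "Pset N (fst \<omega>) (screened \<omega> 0) \<inter> nulls = {j \<in> {..<N}. fst \<omega> j \<and> j \<in> nulls}"
    using init_labeled by (auto simp: Pset_def screened_def)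
  moreover have "Nminus N d (fst \<omega>) (screened \<omega> 0) = ?U"
    by (auto simp: Nminus_def screened_def unscreened_labeled_def nulls_def)
  moreover have "share \<omega> j j = of_bool (fst \<omega> j \<and> j \<in> nulls) * (1 / (1 + card ?U))" for j
  proof (cases "fst \<omega> j \<and> j \<in> nulls")
    case True
    then have "nulls \<inter> insert j (unscreened_labeled \<omega>) = insert j ?U" "j \<notin> ?U"
      by (auto simp: unscreened_labeled_def)
    then show ?thesis using True by (simp add: share_def unscreened_labeled_def)
  qed (auto simp: share_def)
  ultimately show ?thesis
    by (simp only: null_ratio_def null_tests_def null_labeled_def sum_of_bool_mult finite_lessThan)
      simp
qed

lemma sum_share_le: "(\<Sum>i<N. share \<omega> j i) \<le> of_bool (fst \<omega> j)"
proof (cases "fst \<omega> j")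
  case True
  let ?S = "nulls \<inter> insert j (unscreened_labeled \<omega>)"
  have "share \<omega> j i = of_bool (i \<in> ?S) * (1 / card ?S)" for i
    using True by (simp add: share_def)
  then have "(\<Sum>i<N. share \<omega> j i) = card {i \<in> {..<N}. i \<in> ?S} * (1 / card ?S)"
    by (simp only: sum_of_bool_mult finite_lessThan)
  also have "{i \<in> {..<N}. i \<in> ?S} = ?S" by (auto simp: nulls_def)
  finally show ?thesis using True by simp
qed (simp add: share_def)

lemma share_swap_labels:
  assumes "\<omega> \<in> label_space" "i < N" "j < N" "i \<noteq> j"
  shows "share \<omega> j i
    = share (swap_labels i j \<omega>) i i * of_bool (j \<in> unscreened_labeled (swap_labels i j \<omega>))"
proof (cases "i \<notin> set (snd \<omega>) \<and> j \<notin> set (snd \<omega>)")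
  case free: True
  then have sw: "swap_labels i j \<omega> = (fst \<omega> \<circ> Transposition.transpose i j, snd \<omega>)"
    by (simp add: swap_labels_def)
  show ?thesis
  proof (cases "fst \<omega> j \<and> \<not> fst \<omega> i")
    case True
    have "insert i (unscreened_labeled (swap_labels i j \<omega>)) = insert j (unscreened_labeled \<omega>)"
      using free True assms(2-4)
      by (auto simp: unscreened_labeled_def sw Transposition.transpose_def)
    moreover have "i \<in> insert j (unscreened_labeled \<omega>)" "j \<in> unscreened_labeled (swap_labels i j \<omega>)"
      using free True assms(2-4) by (auto simp: unscreened_labeled_def sw)
    ultimately show ?thesis using True by (simp add: share_def sw)
  next
    case False
    then have "share \<omega> j i = 0" using assms(4) by (auto simp: share_def unscreened_labeled_def)
    moreover have "fst (swap_labels i j \<omega>) i \<longrightarrow> j \<notin> unscreened_labeled (swap_labels i j \<omega>)"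
      using False by (auto simp: unscreened_labeled_def sw)
    ultimately show ?thesis by (auto simp: share_def)
  qed
next
  case False
  then have "swap_labels i j \<omega> = \<omega>" by (auto simp: swap_labels_def)
  moreover have "\<not> fst \<omega> x" if "x \<in> set (snd \<omega>)" for x
    using assms(1) that by (auto simp: label_space_iff)
  ultimately show ?thesis
    using False by (auto simp: share_def unscreened_labeled_def)
qed

lemma sum_share_unscreened_labeled:
  assumes "\<omega> \<in> label_space"
  shows "(\<Sum>j<N. of_bool (i \<noteq> j) * (share \<omega> i i * of_bool (j \<in> unscreened_labeled \<omega>)))
       = (n - k) * share \<omega> i i"
proof (cases "fst \<omega> i")
  case True
  then have "of_bool (i \<noteq> j) * (share \<omega> i i * of_bool (j \<in> unscreened_labeled \<omega>))
      = of_bool (j \<in> unscreened_labeled \<omega>) * share \<omega> i i" for j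
    by (auto simp: unscreened_labeled_def)
  then have "(\<Sum>j<N. of_bool (i \<noteq> j) * (share \<omega> i i * of_bool (j \<in> unscreened_labeled \<omega>)))
      = card {j \<in> {..<N}. j \<in> unscreened_labeled \<omega>} * share \<omega> i i"
    by (simp only: sum_of_bool_mult finite_lessThan)
  also have "{j \<in> {..<N}. j \<in> unscreened_labeled \<omega>} = unscreened_labeled \<omega>"
    by (auto simp: unscreened_labeled_def)
  finally show ?thesis using card_unscreened_labeled[OF assms] k_le_n by (simp add: of_nat_diff)
qed (simp add: share_def)

lemma sum_share_le_tests:
  assumes "\<omega> \<in> label_space"
  shows "(\<Sum>j<N. \<Sum>i<N. share \<omega> j i) \<le> m"
proof -
  have "(\<Sum>j<N. \<Sum>i<N. share \<omega> j i) \<le> (\<Sum>j<N. of_bool (fst \<omega> j))"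
    by (rule sum_mono) (rule sum_share_le)
  also have "\<dots> = card ({..<N} \<inter> {j. fst \<omega> j})" by (simp add: sum_of_bool_eq)
  also have "{..<N} \<inter> {j. fst \<omega> j} = {j. fst \<omega> j}" using assms by (auto simp: label_space_iff)
  finally show ?thesis using assms by (simp add: label_space_iff)
qed

lemma sum_off_diagonal_share:
  "(\<Sum>\<omega>\<in>label_space. \<Sum>j<N. \<Sum>i<N. of_bool (i \<noteq> j) * share \<omega> j i)
     = (n - k) * (\<Sum>\<omega>\<in>label_space. \<Sum>i<N. share \<omega> i i)"
proof -
  have "(\<Sum>\<omega>\<in>label_space. \<Sum>j<N. \<Sum>i<N. of_bool (i \<noteq> j) * share \<omega> j i)
      = (\<Sum>j<N. \<Sum>i<N. \<Sum>\<omega>\<in>label_space. of_bool (i \<noteq> j) * share \<omega> j i)"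
    by (rule sum_rotate3)
  also have "\<dots> = (\<Sum>j<N. \<Sum>i<N. \<Sum>\<omega>\<in>label_space.
      of_bool (i \<noteq> j) * (share \<omega> i i * of_bool (j \<in> unscreened_labeled \<omega>)))"
  proof (rule sum.cong[OF refl], rule sum.cong[OF refl])
    fix j i assume "j \<in> {..<N}" "i \<in> {..<N}"
    then show "(\<Sum>\<omega>\<in>label_space. of_bool (i \<noteq> j) * share \<omega> j i)
        = (\<Sum>\<omega>\<in>label_space. of_bool (i \<noteq> j) * (share \<omega> i i * of_bool (j \<in> unscreened_labeled \<omega>)))"
      using sum_swap_labels[of i j
          "\<lambda>\<omega>. of_bool (i \<noteq> j) * (share \<omega> i i * of_bool (j \<in> unscreened_labeled \<omega>))"]
        share_swap_labels
      by (cases "i = j") (auto intro: sum.cong)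
  qed
  also have "\<dots> = (\<Sum>\<omega>\<in>label_space. \<Sum>i<N. \<Sum>j<N.
      of_bool (i \<noteq> j) * (share \<omega> i i * of_bool (j \<in> unscreened_labeled \<omega>)))"
    by (rule trans[OF sum.swap sum_rotate3[symmetric]])
  also have "\<dots> = (\<Sum>\<omega>\<in>label_space. \<Sum>i<N. (n - k) * share \<omega> i i)"
    by (rule sum.cong[OF refl], rule sum.cong[OF refl], rule sum_share_unscreened_labeled)
  also have "\<dots> = (n - k) * (\<Sum>\<omega>\<in>label_space. \<Sum>i<N. share \<omega> i i)"
    by (simp add: sum_distrib_left)
  finally show ?thesis .
qed

lemma sum_null_ratio_0_le:
  "real (n - k + 1) * (\<Sum>\<omega>\<in>label_space. null_ratio \<omega> 0) \<le> card label_space * m"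
proof -
  have "real (n - k + 1) * (\<Sum>\<omega>\<in>label_space. null_ratio \<omega> 0)
      = real (n - k + 1) * (\<Sum>\<omega>\<in>label_space. \<Sum>i<N. share \<omega> i i)"
    by (simp add: null_ratio_0_eq_sum_share cong: sum.cong)
  also have "\<dots> = (\<Sum>\<omega>\<in>label_space. \<Sum>i<N. share \<omega> i i)
      + (\<Sum>\<omega>\<in>label_space. \<Sum>j<N. \<Sum>i<N. of_bool (i \<noteq> j) * share \<omega> j i)"
    unfolding sum_off_diagonal_share by (simp add: algebra_simps)
  also have "\<dots> = (\<Sum>\<omega>\<in>label_space. \<Sum>j<N. \<Sum>i<N. share \<omega> j i)"
    by (subst sum.distrib[symmetric])
      (rule sum.cong[OF refl], rule sum_split_diagonal[symmetric, OF finite_lessThan])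
  also have "\<dots> \<le> (\<Sum>\<omega>\<in>label_space. real m)"
    by (rule sum_mono) (rule sum_share_le_tests)
  finally show ?thesis by simp
qed

lemma sum_fdp_le: "(\<Sum>\<omega>\<in>label_space. acs_fdp n m \<alpha> d (fst \<omega>) (snd \<omega>) rule) \<le> \<alpha> * card label_space"
proof -
  define c where "c = \<alpha> * (real n - real k + 1) / m"
  have c: "0 \<le> c" using \<alpha>_nonneg k_le_n by (simp add: c_def)
  have "(\<Sum>\<omega>\<in>label_space. acs_fdp n m \<alpha> d (fst \<omega>) (snd \<omega>) rule)
      \<le> (\<Sum>\<omega>\<in>label_space. c * stopped_ratio \<omega> (N - k))"
    by (rule sum_mono) (unfold c_def, rule fdp_le_stopped_ratio)
  also have "\<dots> \<le> c * (\<Sum>\<omega>\<in>label_space. null_ratio \<omega> 0)"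
    using mult_left_mono[OF sum_stopped_ratio_le c] by (simp add: sum_distrib_left)
  also have "\<dots> = \<alpha> / m * (real (n - k + 1) * (\<Sum>\<omega>\<in>label_space. null_ratio \<omega> 0))"
    using k_le_n by (simp add: c_def of_nat_diff)
  also have "\<dots> \<le> \<alpha> / m * (card label_space * m)"
    by (rule mult_left_mono[OF sum_null_ratio_0_le]) (use \<alpha>_nonneg in simp)
  also have "\<dots> = \<alpha> * card label_space" using m_pos by simp
  finally show ?thesis .
qed

lemma expected_fdp_le: "(\<integral>\<omega>. acs_fdp n m \<alpha> d (fst \<omega>) (snd \<omega>) rule \<partial>label_pmf n m k) \<le> \<alpha>"
proof -
  have "(\<integral>\<omega>. acs_fdp n m \<alpha> d (fst \<omega>) (snd \<omega>) rule \<partial>label_pmf n m k)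
      = (\<Sum>\<omega>\<in>label_space. acs_fdp n m \<alpha> d (fst \<omega>) (snd \<omega>) rule) / card label_space"
    by (simp add: label_pmf_eq integral_pmf_of_set[OF label_space_nonempty finite_label_space])
  also have "\<dots> \<le> \<alpha>"
    using sum_fdp_le finite_label_space label_space_nonempty
    by (simp add: divide_le_eq card_gt_0_iff)
  finally show ?thesis .
qed

end

theorem theorem1:
  fixes n m k :: nat and \<alpha> :: real
    and MX :: "'x measure" and MC :: "real set measure"
    and Q :: "'x acs_data measure"
    and rule :: "nat \<Rightarrow> 'x acs_info \<Rightarrow> nat"
  assumes "1 \<le> n" and "1 \<le> m" and "k \<le> n" and "0 < \<alpha>" and "\<alpha> < 1"
    and null_meas: "{p \<in> space (borel \<Otimes>\<^sub>M MC). fst p \<in> snd p} \<in> sets (borel \<Otimes>\<^sub>M MC)"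
    and Q_prob: "prob_space Q"
    and Q_sets: "sets Q = sets (\<Pi>\<^sub>M i\<in>{..<n+m}. MX \<Otimes>\<^sub>M borel \<Otimes>\<^sub>M MC)"
    and exch: "\<And>\<sigma>. \<sigma> permutes {..<n+m} \<Longrightarrow> distr Q Q (\<lambda>d. restrict (d \<circ> \<sigma>) {..<n+m}) = Q"
    and rule_meas: "\<And>l. rule l \<in> acs_infoM MX (n+m) \<rightarrow>\<^sub>M count_space UNIV"
    and rule_valid: "\<And>l I. l < n+m \<Longrightarrow> distinct (fst I) \<Longrightarrow> length (fst I) = l
                        \<Longrightarrow> set (fst I) \<subseteq> {..<n+m} \<Longrightarrow> rule l I \<in> {..<n+m} - set (fst I)"
  shows "(\<integral>\<omega>. acs_fdp n m \<alpha> (fst \<omega>) (fst (snd \<omega>)) (snd (snd \<omega>)) rule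
             \<partial>(Q \<Otimes>\<^sub>M measure_pmf (label_pmf n m k))) \<le> \<alpha>"
proof -
  let ?L = "measure_pmf (label_pmf n m k)"
  let ?fdp = "\<lambda>\<omega>. acs_fdp n m \<alpha> (fst \<omega>) (fst (snd \<omega>)) (snd (snd \<omega>)) rule"
  have conditional: "(\<integral>\<omega>. acs_fdp n m \<alpha> d (fst \<omega>) (snd \<omega>) rule \<partial>?L) \<le> \<alpha>" for d
  proof -
    interpret acs_fixed_data n m k \<alpha> d rule
      using assms(2-4) rule_valid by unfold_locales auto
    show ?thesis by (rule expected_fdp_le)
  qed
  show ?thesis
  proof (cases "integrable (Q \<Otimes>\<^sub>M ?L) ?fdp")
    case True
    interpret pair_sigma_finite Q ?L
      by (simp add: pair_sigma_finite_def prob_space_imp_sigma_finite[OF Q_prob]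
          prob_space_imp_sigma_finite[OF measure_pmf.prob_space_axioms])
    have "(\<integral>d. (\<integral>\<omega>. ?fdp (d, \<omega>) \<partial>?L) \<partial>Q) \<le> \<alpha>"
      using conditional
      by (intro prob_space.integral_le_const[OF Q_prob integrable_fst'[OF True]]) simp
    then show ?thesis using integral_fst'[OF True] by simp
  qed (use assms(4) in \<open>simp add: not_integrable_integral_eq\<close>)
qed

end
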